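(* Let $p$ be a prime and $X$ a countable set. For every $A\in\mathcal{B}(\mathbb{Q}_p(X))$ we have $\|A\|=\max\{|A_{ij}|_p: i,j\in X\}$ (in particular the maximum exists).
   Context: $\mathbb{Q}_p(X)$ is the set of maps $\xi:X\to\mathbb{Q}_p$ with $|\xi(i)|_p\le1$ for all but finitely many $i$, a $\mathbb{Z}_p$-module under coordinatewise operations, with the topology $\tau$ in which $A\subseteq\mathbb{Q}_p(X)$ is open iff for every finite $P\subseteq X$ the set $A\cap\big(\prod_{i\in P}\mathbb{Q}_p\times\prod_{j\in X\setminus P}\mathbb{Z}_p\big)$ is open in the product topology. $\mathcal{B}(\mathbb{Q}_p(X))$ is the set of $\tau$-continuous $\mathbb{Z}_p$-linear maps. Norm $\|\xi\|=\max_i|\xi(i)|_p$, operator norm $\|A\|=\sup_{\|\xi\|\le1}\|A\xi\|$. Matrix entries: $A_{ij}=(A\delta_j)(i)$, where $\delta_j(j)=1$ and $\delta_j(y)=0$ for $y\ne j$. *)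

theory Defs
  imports "HOL-Analysis.Analysis" "HOL-Computational_Algebra.Primes"
begin

definition padic_abs_rat :: "nat \<Rightarrow> rat \<Rightarrow> real" where
  "padic_abs_rat p q =
     (if q = 0 then 0
      else real p powr (- (real (multiplicity (int p) (fst (quotient_of q)))
                          - real (multiplicity (int p) (snd (quotient_of q))))))"

text \<open>A model of Q_p: a field of characteristic 0 with an absolute value nv which
  restricts to the p-adic absolute value on Q, in which Q is dense, and which is
  complete; i.e. the completion of Q w.r.t. the p-adic absolute value.\<close>
definition is_Qp :: "nat \<Rightarrow> ('a::field_char_0 \<Rightarrow> real) \<Rightarrow> bool" where
  "is_Qp p nv \<longleftrightarrow>
     (\<forall>x. 0 \<le> nv x) \<and> (\<forall>x. nv x = 0 \<longleftrightarrow> x = 0) \<and>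
     (\<forall>x y. nv (x * y) = nv x * nv y) \<and>
     (\<forall>x y. nv (x + y) \<le> max (nv x) (nv y)) \<and>
     (\<forall>q. nv (of_rat q) = padic_abs_rat p q) \<and>
     (\<forall>x e. e > 0 \<longrightarrow> (\<exists>q. nv (x - of_rat q) < e)) \<and>
     (\<forall>s::nat \<Rightarrow> 'a. (\<forall>e>0. \<exists>N. \<forall>m\<ge>N. \<forall>n\<ge>N. nv (s m - s n) < e) \<longrightarrow>
        (\<exists>L. \<forall>e>0. \<exists>N. \<forall>n\<ge>N. nv (s n - L) < e))"

definition Zp :: "('a \<Rightarrow> real) \<Rightarrow> 'a set" where
  "Zp nv = {x. nv x \<le> 1}"

definition Qp_top :: "('a::ab_group_add \<Rightarrow> real) \<Rightarrow> 'a topology" where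
  "Qp_top nv = topology (\<lambda>U. \<forall>x\<in>U. \<exists>e>0. \<forall>y. nv (y - x) < e \<longrightarrow> y \<in> U)"

text \<open>Q_p(X), with X = UNIV of the index type.\<close>
definition QpX :: "('a \<Rightarrow> real) \<Rightarrow> ('x \<Rightarrow> 'a) set" where
  "QpX nv = {\<xi>. finite {i. \<not> nv (\<xi> i) \<le> 1}}"

definition piece :: "('a \<Rightarrow> real) \<Rightarrow> 'x set \<Rightarrow> ('x \<Rightarrow> 'a) set" where
  "piece nv P = {\<xi>. \<forall>j. j \<notin> P \<longrightarrow> \<xi> j \<in> Zp nv}"

definition piece_top :: "('a::ab_group_add \<Rightarrow> real) \<Rightarrow> 'x set \<Rightarrow> ('x \<Rightarrow> 'a) topology" where
  "piece_top nv P = product_topology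
     (\<lambda>i. if i \<in> P then Qp_top nv else subtopology (Qp_top nv) (Zp nv)) UNIV"

definition tau_open :: "('a::ab_group_add \<Rightarrow> real) \<Rightarrow> ('x \<Rightarrow> 'a) set \<Rightarrow> bool" where
  "tau_open nv A \<longleftrightarrow> A \<subseteq> QpX nv \<and>
     (\<forall>P. finite P \<longrightarrow> openin (piece_top nv P) (A \<inter> piece nv P))"

definition bounded_ops :: "('a::comm_ring_1 \<Rightarrow> real) \<Rightarrow> (('x \<Rightarrow> 'a) \<Rightarrow> ('x \<Rightarrow> 'a)) set" where
  "bounded_ops nv = {A.
     (\<forall>\<xi>\<in>QpX nv. A \<xi> \<in> QpX nv) \<and>
     (\<forall>\<xi>\<in>QpX nv. \<forall>\<eta>\<in>QpX nv. A (\<lambda>i. \<xi> i + \<eta> i) = (\<lambda>i. A \<xi> i + A \<eta> i)) \<and>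
     (\<forall>c\<in>Zp nv. \<forall>\<xi>\<in>QpX nv. A (\<lambda>i. c * \<xi> i) = (\<lambda>i. c * A \<xi> i)) \<and>
     (\<forall>U. tau_open nv U \<longrightarrow> tau_open nv {\<xi>\<in>QpX nv. A \<xi> \<in> U})}"

definition vnorm :: "('a \<Rightarrow> real) \<Rightarrow> ('x \<Rightarrow> 'a) \<Rightarrow> real" where
  "vnorm nv \<xi> = (SUP i. nv (\<xi> i))"

definition opnorm :: "('a \<Rightarrow> real) \<Rightarrow> (('x \<Rightarrow> 'a) \<Rightarrow> ('x \<Rightarrow> 'a)) \<Rightarrow> real" where
  "opnorm nv A = (SUP \<xi>\<in>{\<xi>\<in>QpX nv. vnorm nv \<xi> \<le> 1}. vnorm nv (A \<xi>))"

definition delta :: "'x \<Rightarrow> 'x \<Rightarrow> 'a::zero_neq_one" where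
  "delta j = (\<lambda>y. if y = j then 1 else 0)"

definition mat_entry :: "(('x \<Rightarrow> 'a) \<Rightarrow> ('x \<Rightarrow> 'a)) \<Rightarrow> 'x \<Rightarrow> 'x \<Rightarrow> 'a::zero_neq_one" where
  "mat_entry A i j = A (delta j) i"

end

theory Submission
  imports Defs
begin

text \<open>Only two properties of \<open>Q\<^sub>p\<close> matter: \<open>|\<cdot>|\<^sub>p\<close> is an ultrametric absolute value, and its
  nonzero values form the discrete set \<open>p\<^sup>\<int>\<close>.
  Split a vector \<open>\<xi>\<close> of the unit ball into its part on a finite set \<open>F\<close> and a tail vanishing
  on \<open>F\<close>. By \<open>\<tau>\<close>-continuity at \<open>0\<close>, a suitable \<open>F\<close> makes \<open>A\<close> of the tail lie in the unit
  ball, which bounds all entries \<open>|A\<^sub>i\<^sub>j|\<close> uniformly; another \<open>F\<close> makes the \<open>i\<close>-th coordinate of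
  \<open>A\<close> of the tail smaller than any given positive bound, and then the ultrametric inequality gives
  \<open>|(A\<xi>)\<^sub>i| \<le> sup |A\<^sub>i\<^sub>j|\<close>. Hence \<open>\<parallel>A\<parallel> = sup |A\<^sub>i\<^sub>j|\<close>, and the supremum is attained because a
  bounded set of reals inside \<open>{0} \<union> p\<^sup>\<int>\<close> has a maximum.\<close>

lemma istopology_Qp_top:
  fixes nv :: "'a::ab_group_add \<Rightarrow> real"
  shows "istopology (\<lambda>U. \<forall>x\<in>U. \<exists>e>0. \<forall>y. nv (y - x) < e \<longrightarrow> y \<in> U)"
  unfolding istopology_def
proof (intro conjI allI impI ballI)
  fix S T :: "'a set" and x
  assume "\<forall>x\<in>S. \<exists>e>0. \<forall>y. nv (y - x) < e \<longrightarrow> y \<in> S"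
    and "\<forall>x\<in>T. \<exists>e>0. \<forall>y. nv (y - x) < e \<longrightarrow> y \<in> T" and "x \<in> S \<inter> T"
  then obtain e1 e2 where "e1 > 0" "\<forall>y. nv (y - x) < e1 \<longrightarrow> y \<in> S"
    and "e2 > 0" "\<forall>y. nv (y - x) < e2 \<longrightarrow> y \<in> T"
    by blast
  then show "\<exists>e>0. \<forall>y. nv (y - x) < e \<longrightarrow> y \<in> S \<inter> T"
    by (intro exI[of _ "min e1 e2"]) auto
qed (meson UnionE UnionI)

lemma openin_Qp_top:
  "openin (Qp_top nv) U \<longleftrightarrow> (\<forall>x\<in>U. \<exists>e>0. \<forall>y. nv (y - x) < e \<longrightarrow> y \<in> U)"
  unfolding Qp_top_def topology_inverse'[OF istopology_Qp_top] ..

lemma topspace_Qp_top [simp]: "topspace (Qp_top nv) = UNIV"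
proof -
  have "openin (Qp_top nv) UNIV"
    by (auto simp: openin_Qp_top intro: exI[of _ 1])
  then show ?thesis
    using openin_subset by blast
qed

lemma topspace_piece_top: "topspace (piece_top nv P) = piece nv P"
proof -
  have "topspace (piece_top nv P) = {x. \<forall>i. x i \<in> (if i \<in> P then UNIV else Zp nv)}"
    by (simp add: piece_top_def PiE_UNIV_domain Pi_def if_distrib)
  also have "\<dots> = piece nv P"
    by (auto simp: piece_def)
  finally show ?thesis .
qed

lemma piece_subset_QpX: "finite P \<Longrightarrow> piece nv P \<subseteq> QpX nv"
  unfolding piece_def QpX_def Zp_def by (auto elim: finite_subset[rotated])

lemma unit_ball_subset_QpX: "(\<And>i. nv (\<xi> i) \<le> 1) \<Longrightarrow> \<xi> \<in> QpX nv"
  unfolding QpX_def by simp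

lemma bdd_above_QpX:
  assumes "\<xi> \<in> QpX nv"
  shows "bdd_above (range (\<lambda>i. nv (\<xi> i)))"
proof -
  have "range (\<lambda>i. nv (\<xi> i)) \<subseteq> {..1} \<union> (\<lambda>i. nv (\<xi> i)) ` {i. \<not> nv (\<xi> i) \<le> 1}"
    by auto
  moreover have "bdd_above ({..1} \<union> (\<lambda>i. nv (\<xi> i)) ` {i. \<not> nv (\<xi> i) \<le> 1})"
    using assms by (simp add: QpX_def)
  ultimately show ?thesis
    by (rule bdd_above_mono[rotated])
qed

lemma vnorm_le_1_iff: "\<xi> \<in> QpX nv \<Longrightarrow> vnorm nv \<xi> \<le> 1 \<longleftrightarrow> (\<forall>i. nv (\<xi> i) \<le> 1)"
  unfolding vnorm_def by (simp add: cSUP_le_iff bdd_above_QpX)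

lemma opnorm_unit_ball:
  "opnorm nv A = (SUP \<xi>\<in>{\<xi>. \<forall>i. nv (\<xi> i) \<le> 1}. vnorm nv (A \<xi>))"
proof -
  have "{\<xi>\<in>QpX nv. vnorm nv \<xi> \<le> 1} = {\<xi>. \<forall>i. nv (\<xi> i) \<le> 1}"
    using vnorm_le_1_iff unit_ball_subset_QpX by blast
  then show ?thesis
    unfolding opnorm_def by (rule arg_cong)
qed

lemma bounded_opsD:
  assumes "A \<in> bounded_ops nv"
  shows bounded_op_QpX: "\<xi> \<in> QpX nv \<Longrightarrow> A \<xi> \<in> QpX nv"
    and bounded_op_add: "\<xi> \<in> QpX nv \<Longrightarrow> \<eta> \<in> QpX nv \<Longrightarrow> A (\<lambda>i. \<xi> i + \<eta> i) = (\<lambda>i. A \<xi> i + A \<eta> i)"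
    and bounded_op_scale: "c \<in> Zp nv \<Longrightarrow> \<xi> \<in> QpX nv \<Longrightarrow> A (\<lambda>i. c * \<xi> i) = (\<lambda>i. c * A \<xi> i)"
    and bounded_op_tau_open: "tau_open nv U \<Longrightarrow> tau_open nv {\<xi>\<in>QpX nv. A \<xi> \<in> U}"
  using assms unfolding bounded_ops_def by auto

locale ultrametric_abs =
  fixes nv :: "'a::comm_ring_1 \<Rightarrow> real"
  assumes nv_nonneg: "0 \<le> nv x"
    and nv_eq_0_iff: "nv x = 0 \<longleftrightarrow> x = 0"
    and nv_mult: "nv (x * y) = nv x * nv y"
    and nv_ultrametric: "nv (x + y) \<le> max (nv x) (nv y)"
begin

lemma nv_0 [simp]: "nv 0 = 0"
  by (simp add: nv_eq_0_iff)

lemma nv_1 [simp]: "nv 1 = 1"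
proof -
  have "nv 1 * (nv 1 - 1) = 0"
    using nv_mult[of 1 1] by (simp add: algebra_simps)
  then show ?thesis
    by (simp add: nv_eq_0_iff)
qed

lemma nv_minus [simp]: "nv (- x) = nv x"
proof -
  have "(nv (-1) - 1) * (nv (-1) + 1) = 0"
    using nv_mult[of "-1" "-1"] by (simp add: algebra_simps)
  then have "nv (-1) = 1"
    using nv_nonneg[of "-1"] by auto
  then show ?thesis
    using nv_mult[of "-1" x] by simp
qed

lemma nv_minus_commute: "nv (x - y) = nv (y - x)"
  using nv_minus[of "x - y"] by simp

lemma nv_eq_if_nv_diff_less:
  assumes "nv (x - y) < nv x"
  shows "nv y = nv x"
proof -
  have "nv x \<le> max (nv (x - y)) (nv y)"
    using nv_ultrametric[of "x - y" y] by simp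
  moreover have "nv y \<le> max (nv (y - x)) (nv x)"
    using nv_ultrametric[of "y - x" x] by simp
  ultimately show ?thesis
    using assms nv_minus_commute[of x y] by auto
qed

lemma nv_sum_le:
  assumes "finite F" "0 \<le> b" "\<And>j. j \<in> F \<Longrightarrow> nv (f j) \<le> b"
  shows "nv (sum f F) \<le> b"
  using assms
proof (induction F rule: finite_induct)
  case (insert x F)
  then have "nv (f x) \<le> b" "nv (sum f F) \<le> b"
    by simp_all
  then show ?case
    using nv_ultrametric[of "f x" "sum f F"] insert.hyps by simp
qed simp

lemma openin_Qp_top_ball: "openin (Qp_top nv) {x. nv x < d}"
  unfolding openin_Qp_top
proof (intro ballI exI conjI allI impI)
  fix x y
  assume x: "x \<in> {x. nv x < d}"
  then show "0 < d"
    using nv_nonneg[of x] by simp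
  assume "nv (y - x) < d"
  then show "y \<in> {x. nv x < d}"
    using x nv_ultrametric[of "y - x" x] by simp
qed

lemma openin_Qp_top_Zp: "openin (Qp_top nv) (Zp nv)"
  unfolding openin_Qp_top Zp_def
proof (intro ballI exI[of _ 1] conjI allI impI)
  fix x y
  assume "x \<in> {x. nv x \<le> 1}" "nv (y - x) < 1"
  then show "y \<in> {x. nv x \<le> 1}"
    using nv_ultrametric[of "y - x" x] by simp
qed simp

lemma tau_open_coordinate_preimage:
  fixes i :: 'x
  assumes "openin (Qp_top nv) W"
  shows "tau_open nv {\<eta>\<in>QpX nv. \<eta> i \<in> W}"
  unfolding tau_open_def
proof (intro conjI allI impI)
  fix P :: "'x set"
  assume P: "finite P"
  have "continuous_map (piece_top nv P)
      (if i \<in> P then Qp_top nv else subtopology (Qp_top nv) (Zp nv)) (\<lambda>x. x i)"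
    unfolding piece_top_def by (rule continuous_map_product_projection) simp
  then have "continuous_map (piece_top nv P) (Qp_top nv) (\<lambda>x. x i)"
    by (cases "i \<in> P") (auto dest: continuous_map_into_fulltopology)
  then have "openin (piece_top nv P) {x \<in> topspace (piece_top nv P). x i \<in> W}"
    using assms by (rule openin_continuous_map_preimage)
  moreover have "{x \<in> topspace (piece_top nv P). x i \<in> W} = {\<eta>\<in>QpX nv. \<eta> i \<in> W} \<inter> piece nv P"
    using piece_subset_QpX[OF P] by (auto simp: topspace_piece_top)
  ultimately show "openin (piece_top nv P) ({\<eta>\<in>QpX nv. \<eta> i \<in> W} \<inter> piece nv P)"
    by simp
qed auto

lemma tau_open_unit_ball: "tau_open nv {\<eta>\<in>QpX nv. \<forall>i. nv (\<eta> i) \<le> 1}"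
  unfolding tau_open_def
proof (intro conjI allI impI)
  fix P :: "'x set"
  assume P: "finite P"
  have "openin (piece_top nv P) (PiE UNIV (\<lambda>i. Zp nv))"
    unfolding piece_top_def openin_PiE_gen
  proof (intro disjI2 conjI ballI)
    show "finite {i \<in> UNIV. Zp nv \<noteq> topspace (if i \<in> P then Qp_top nv else subtopology (Qp_top nv) (Zp nv))}"
      by (rule finite_subset[OF _ P]) auto
    show "openin (if i \<in> P then Qp_top nv else subtopology (Qp_top nv) (Zp nv)) (Zp nv)" for i
      using openin_Qp_top_Zp by (auto simp: openin_subtopology_refl)
  qed
  moreover have "{\<eta>\<in>QpX nv. \<forall>i. nv (\<eta> i) \<le> 1} \<inter> piece nv P = PiE UNIV (\<lambda>i. Zp nv)"
    unfolding QpX_def piece_def Zp_def by (auto simp: PiE_iff)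
  ultimately show "openin (piece_top nv P) ({\<eta>\<in>QpX nv. \<forall>i. nv (\<eta> i) \<le> 1} \<inter> piece nv P)"
    by simp
qed auto

lemma delta_in_QpX: "delta j \<in> QpX nv"
  by (rule unit_ball_subset_QpX) (simp add: delta_def)

lemma zero_in_QpX: "(\<lambda>i. 0) \<in> QpX nv"
  by (rule unit_ball_subset_QpX) simp

lemma bounded_op_zero:
  assumes "A \<in> bounded_ops nv"
  shows "A (\<lambda>i. 0) = (\<lambda>i. 0)"
  using bounded_op_scale[OF assms _ zero_in_QpX, of 0] by (simp add: Zp_def)

text \<open>Continuity at \<open>0\<close> on the piece \<open>P = {}\<close>: there \<open>\<tau>\<close> is the product topology of
  \<open>Z\<^sub>p\<^sup>X\<close>, and a basic neighbourhood of \<open>0\<close> constrains only finitely many coordinates.\<close>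
lemma bounded_op_maps_tails_into:
  fixes A :: "('x \<Rightarrow> 'a) \<Rightarrow> 'x \<Rightarrow> 'a"
  assumes A: "A \<in> bounded_ops nv" and U: "tau_open nv U" and U0: "(\<lambda>i. 0) \<in> U"
  obtains F where "finite F"
    and "\<And>\<xi>. \<forall>j. nv (\<xi> j) \<le> 1 \<Longrightarrow> \<forall>j\<in>F. \<xi> j = 0 \<Longrightarrow> A \<xi> \<in> U"
proof -
  define V where "V = {\<xi>\<in>QpX nv. A \<xi> \<in> U}"
  have "tau_open nv V"
    unfolding V_def by (rule bounded_op_tau_open[OF A U])
  then have "openin (piece_top nv {}) (V \<inter> piece nv {})"
    unfolding tau_open_def by blast
  then have "openin (product_topology (\<lambda>i. subtopology (Qp_top nv) (Zp nv)) UNIV) (V \<inter> piece nv {})"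
    by (simp add: piece_top_def)
  moreover have "(\<lambda>i. 0) \<in> V \<inter> piece nv {}"
    using bounded_op_zero[OF A] U0 zero_in_QpX
    unfolding V_def piece_def Zp_def by simp
  ultimately obtain W where
    fin: "finite {i \<in> UNIV. W i \<noteq> topspace (subtopology (Qp_top nv) (Zp nv))}"
    and W0: "(\<lambda>i. 0) \<in> PiE UNIV W" and W: "PiE UNIV W \<subseteq> V \<inter> piece nv {}"
    unfolding openin_product_topology_alt by blast
  show ?thesis
  proof
    show "finite {i. W i \<noteq> Zp nv}"
      using fin by simp
    fix \<xi> :: "'x \<Rightarrow> 'a"
    assume unit: "\<forall>j. nv (\<xi> j) \<le> 1" and vanish: "\<forall>j\<in>{i. W i \<noteq> Zp nv}. \<xi> j = 0"
    have "\<xi> j \<in> W j" for j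
    proof (cases "W j = Zp nv")
      case True
      then show ?thesis
        using unit by (simp add: Zp_def)
    next
      case False
      then show ?thesis
        using vanish W0 by (auto simp: PiE_iff)
    qed
    then have "\<xi> \<in> PiE UNIV W"
      by (simp add: PiE_UNIV_domain)
    then show "A \<xi> \<in> U"
      using W unfolding V_def by blast
  qed
qed

lemma bounded_op_split_finite:
  assumes A: "A \<in> bounded_ops nv" and F: "finite F" and \<xi>: "\<xi> \<in> QpX nv"
    and unit: "\<forall>j\<in>F. nv (\<xi> j) \<le> 1"
  shows "A \<xi> i = (\<Sum>j\<in>F. \<xi> j * mat_entry A i j) + A (\<lambda>k. if k \<in> F then 0 else \<xi> k) i"
  using F unit
proof (induction F rule: finite_induct)
  case (insert j F)
  define rest where "rest = (\<lambda>k. if k \<in> insert j F then 0 else \<xi> k)"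
  have cj: "\<xi> j \<in> Zp nv"
    using insert.prems by (simp add: Zp_def)
  have "(\<lambda>k. \<xi> j * delta j k) \<in> QpX nv"
    using cj by (intro unit_ball_subset_QpX) (simp add: delta_def Zp_def)
  moreover have "rest \<in> QpX nv"
    using \<xi> unfolding QpX_def rest_def by (auto elim: finite_subset[rotated])
  moreover have "(\<lambda>k. if k \<in> F then 0 else \<xi> k) = (\<lambda>k. \<xi> j * delta j k + rest k)"
    using insert.hyps unfolding rest_def delta_def by auto
  ultimately have "A (\<lambda>k. if k \<in> F then 0 else \<xi> k) i = \<xi> j * mat_entry A i j + A rest i"
    using bounded_op_add[OF A] bounded_op_scale[OF A cj delta_in_QpX]
    by (simp add: mat_entry_def)
  then show ?case
    using insert by (simp add: rest_def algebra_simps)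
qed simp

lemma mat_entries_bounded:
  assumes A: "A \<in> bounded_ops nv"
  shows "bdd_above (range (\<lambda>(i, j). nv (mat_entry A i j)))"
proof -
  obtain F where F: "finite F"
    and tails: "\<And>\<xi>. \<forall>j. nv (\<xi> j) \<le> 1 \<Longrightarrow> \<forall>j\<in>F. \<xi> j = 0 \<Longrightarrow> A \<xi> \<in> {\<eta>\<in>QpX nv. \<forall>i. nv (\<eta> i) \<le> 1}"
    using bounded_op_maps_tails_into[OF A tau_open_unit_ball] zero_in_QpX
    by auto
  have "A (delta j) \<in> {\<eta>\<in>QpX nv. \<forall>i. nv (\<eta> i) \<le> 1}" if "j \<notin> F" for j
    by (rule tails) (use that in \<open>auto simp: delta_def\<close>)
  then have "range (\<lambda>(i, j). nv (mat_entry A i j)) \<subseteq> {..1} \<union> (\<Union>j\<in>F. range (\<lambda>i. nv (A (delta j) i)))"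
    by (force simp: mat_entry_def)
  moreover have "bdd_above ({..1} \<union> (\<Union>j\<in>F. range (\<lambda>i. nv (A (delta j) i))))"
    using F bdd_above_QpX[OF bounded_op_QpX[OF A delta_in_QpX]] by simp
  ultimately show ?thesis
    by (rule bdd_above_mono[rotated])
qed

lemma bounded_op_coordinate_le:
  assumes A: "A \<in> bounded_ops nv" and M: "\<And>k l. nv (mat_entry A k l) \<le> M"
    and unit: "\<forall>j. nv (\<xi> j) \<le> 1"
  shows "nv (A \<xi> i) \<le> M"
proof (rule ccontr)
  define d where "d = nv (A \<xi> i)"
  assume "\<not> nv (A \<xi> i) \<le> M"
  then have "M < d"
    by (simp add: d_def)
  have M0: "0 \<le> M"
    using M[of i i] nv_nonneg[of "mat_entry A i i"] by simp
  obtain F where F: "finite F"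
    and tails: "\<And>\<eta>. \<forall>j. nv (\<eta> j) \<le> 1 \<Longrightarrow> \<forall>j\<in>F. \<eta> j = 0 \<Longrightarrow> A \<eta> \<in> {\<eta>\<in>QpX nv. nv (\<eta> i) < d}"
    using bounded_op_maps_tails_into[OF A tau_open_coordinate_preimage[OF openin_Qp_top_ball[of d], of i]]
      zero_in_QpX M0 \<open>M < d\<close>
    by auto
  have tail: "nv (A (\<lambda>k. if k \<in> F then 0 else \<xi> k) i) < d"
    using tails[of "\<lambda>k. if k \<in> F then 0 else \<xi> k"] unit by simp
  have head: "nv (\<Sum>j\<in>F. \<xi> j * mat_entry A i j) \<le> M"
  proof (rule nv_sum_le[OF F M0])
    fix j
    have "nv (\<xi> j) * nv (mat_entry A i j) \<le> 1 * M"
      using unit M nv_nonneg by (intro mult_mono) auto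
    then show "nv (\<xi> j * mat_entry A i j) \<le> M"
      by (simp add: nv_mult)
  qed
  have "d \<le> max (nv (\<Sum>j\<in>F. \<xi> j * mat_entry A i j)) (nv (A (\<lambda>k. if k \<in> F then 0 else \<xi> k) i))"
    unfolding d_def
    using bounded_op_split_finite[OF A F unit_ball_subset_QpX, of \<xi> i] unit nv_ultrametric
    by metis
  then show False
    using head tail \<open>M < d\<close> by linarith
qed

lemma opnorm_eq_SUP_mat_entries:
  fixes A :: "('x \<Rightarrow> 'a) \<Rightarrow> 'x \<Rightarrow> 'a"
  assumes A: "A \<in> bounded_ops nv"
  shows "opnorm nv A = (SUP (k, l). nv (mat_entry A k l))"
proof -
  define M where "M = (SUP (k, l). nv (mat_entry A k l))"
  have entry_le: "nv (mat_entry A k l) \<le> M" for k l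
    using cSUP_upper[OF _ mat_entries_bounded[OF A], of "(k, l)"] by (simp add: M_def)
  have ball_le: "vnorm nv (A \<xi>) \<le> M" if "\<forall>i. nv (\<xi> i) \<le> 1" for \<xi>
    unfolding vnorm_def using bounded_op_coordinate_le[OF A entry_le that]
    by (intro cSUP_least) auto
  have "(\<lambda>i. 0) \<in> {\<xi> :: 'x \<Rightarrow> 'a. \<forall>i. nv (\<xi> i) \<le> 1}"
    by simp
  then have "{\<xi> :: 'x \<Rightarrow> 'a. \<forall>i. nv (\<xi> i) \<le> 1} \<noteq> {}"
    by (metis empty_iff)
  then have "opnorm nv A \<le> M"
    unfolding opnorm_unit_ball by (rule cSUP_least) (simp add: ball_le)
  moreover have "M \<le> opnorm nv A"
    unfolding M_def
  proof (rule cSUP_least, simp, clarify)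
    fix k l
    have "nv (mat_entry A k l) \<le> vnorm nv (A (delta l))"
      unfolding vnorm_def mat_entry_def
      using bdd_above_QpX[OF bounded_op_QpX[OF A delta_in_QpX]] by (rule cSUP_upper[rotated]) simp
    also have "\<dots> \<le> opnorm nv A"
      unfolding opnorm_unit_ball
    proof (rule cSUP_upper)
      show "delta l \<in> {\<xi>. \<forall>i. nv (\<xi> i) \<le> 1}"
        by (simp add: delta_def)
      show "bdd_above ((\<lambda>\<xi>. vnorm nv (A \<xi>)) ` {\<xi>. \<forall>i. nv (\<xi> i) \<le> 1})"
        by (rule bdd_aboveI2[of _ _ M]) (simp add: ball_le)
    qed
    finally show "nv (mat_entry A k l) \<le> opnorm nv A" .
  qed
  ultimately show ?thesis
    by (simp add: M_def)
qed

end

lemma Sup_mem_if_powr_int_valued: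
  fixes b :: real and S :: "real set"
  assumes b: "1 < b" and S: "S \<subseteq> insert 0 (range (\<lambda>k::int. b powr k))"
    and bdd: "bdd_above S" and "S \<noteq> {}"
  shows "Sup S \<in> S"
proof (cases "\<exists>k::int. b powr k \<in> S")
  case False
  then have "S = {0}"
    using S \<open>S \<noteq> {}\<close> by auto
  then show ?thesis
    by simp
next
  case True
  then obtain k0 :: int where k0: "b powr k0 \<in> S" ..
  obtain B where B: "\<And>s. s \<in> S \<Longrightarrow> s \<le> B"
    using bdd by (auto simp: bdd_above_def)
  define T where "T = {s\<in>S. b powr k0 \<le> s}"
  have "T \<subseteq> (\<lambda>k. b powr k) ` {k0..\<lfloor>log b B\<rfloor>}"
  proof
    fix s
    assume s: "s \<in> T"
    moreover have "0 < b powr k0"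
      using b by simp
    ultimately obtain k :: int where k: "s = b powr k"
      using S unfolding T_def by force
    have "b powr k \<le> B"
      using B s k unfolding T_def by blast
    moreover have "0 < b powr k"
      using b by simp
    ultimately have "0 < B"
      by linarith
    then have "k \<le> log b B"
      using le_log_iff[OF b, of B k] \<open>b powr k \<le> B\<close> by simp
    moreover have "k0 \<le> k"
      using s k b unfolding T_def by simp
    ultimately show "s \<in> (\<lambda>k. b powr k) ` {k0..\<lfloor>log b B\<rfloor>}"
      using k by (auto simp: le_floor_iff)
  qed
  then have "finite T"
    by (rule finite_subset) simp
  moreover have "b powr k0 \<in> T"
    using k0 by (simp add: T_def)
  ultimately have "Max T \<in> T" and T_le_Max: "\<And>s. s \<in> T \<Longrightarrow> s \<le> Max T"
    by (auto intro: Max_in)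
  then have "Max T \<in> S"
    by (simp add: T_def)
  moreover have "s \<le> Max T" if "s \<in> S" for s
  proof (cases "b powr k0 \<le> s")
    case True
    then show ?thesis
      using that T_le_Max by (simp add: T_def)
  next
    case False
    then show ?thesis
      using T_le_Max[OF \<open>b powr k0 \<in> T\<close>] by simp
  qed
  ultimately show ?thesis
    using cSup_eq_maximum[of "Max T" S] by simp
qed

lemma is_QpD:
  assumes "is_Qp p nv"
  shows is_Qp_ultrametric_abs: "ultrametric_abs nv"
    and is_Qp_of_rat: "nv (of_rat q) = padic_abs_rat p q"
    and is_Qp_dense: "0 < e \<Longrightarrow> \<exists>q. nv (x - of_rat q) < e"
  using assms unfolding is_Qp_def ultrametric_abs_def by (elim conjE; blast)+

lemma is_Qp_nv_in_powr_int:
  assumes Qp: "is_Qp p nv"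
  shows "nv x \<in> insert 0 (range (\<lambda>k::int. real p powr k))"
proof (cases "x = 0")
  case False
  interpret ultrametric_abs nv
    using Qp by (rule is_Qp_ultrametric_abs)
  have "0 < nv x"
    using False nv_nonneg[of x] nv_eq_0_iff[of x] by linarith
  then obtain q where "nv (x - of_rat q) < nv x"
    using is_Qp_dense[OF Qp] by blast
  then have q: "nv (of_rat q) = nv x"
    by (rule nv_eq_if_nv_diff_less)
  then have "q \<noteq> 0"
    using \<open>0 < nv x\<close> by auto
  then have "nv x = real p powr (int (multiplicity (int p) (snd (quotient_of q)))
      - int (multiplicity (int p) (fst (quotient_of q))))"
    using is_Qp_of_rat[OF Qp, of q] unfolding q padic_abs_rat_def by simp
  then show ?thesis
    by blast
qed (simp add: is_Qp_ultrametric_abs[OF Qp] ultrametric_abs.nv_0)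

theorem lemma2p27:
  fixes p :: nat and nv :: "'a::field_char_0 \<Rightarrow> real"
    and A :: "('x::countable \<Rightarrow> 'a) \<Rightarrow> ('x \<Rightarrow> 'a)"
  assumes "prime p" and "is_Qp p nv" and "A \<in> bounded_ops nv"
  shows "\<exists>i j. (\<forall>k l. nv (mat_entry A k l) \<le> nv (mat_entry A i j))
               \<and> opnorm nv A = nv (mat_entry A i j)"
proof -
  interpret ultrametric_abs nv
    using \<open>is_Qp p nv\<close> by (rule is_Qp_ultrametric_abs)
  let ?S = "range (\<lambda>(k, l). nv (mat_entry A k l))"
  have "?S \<subseteq> insert 0 (range (\<lambda>k::int. real p powr k))"
    using is_Qp_nv_in_powr_int[OF \<open>is_Qp p nv\<close>] by auto
  then have "Sup ?S \<in> ?S"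
    using prime_gt_1_nat[OF \<open>prime p\<close>] mat_entries_bounded[OF \<open>A \<in> bounded_ops nv\<close>]
    by (intro Sup_mem_if_powr_int_valued) auto
  then obtain i j where max: "Sup ?S = nv (mat_entry A i j)"
    by auto
  have "nv (mat_entry A k l) \<le> nv (mat_entry A i j)" for k l
    using cSUP_upper[OF UNIV_I mat_entries_bounded[OF \<open>A \<in> bounded_ops nv\<close>], of "(k, l)"] max
    by simp
  moreover have "opnorm nv A = nv (mat_entry A i j)"
    using opnorm_eq_SUP_mat_entries[OF \<open>A \<in> bounded_ops nv\<close>] max by simp
  ultimately show ?thesis
    by blast
qed

end
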